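(* Let $d\ge1$, $L\ge3$, $r\ge1$ be integers, $n=L^d$. Let $\tau_1$ be the relaxation time of the ZRP with rate $1$ and $r$ particles on the torus $\mathbf{Z}^d/L\mathbf{Z}^d$, and let $\tau_2$ be the relaxation time of the ZRP with rate $1$ and $r$ particles on the complete graph $K_n$ (no self-loops). Then $\tau_1\le 2d^2L^2\,\tau_2$. *)

theory Defs
  imports Complex_Main
begin

text \<open>Zero-range process (ZRP) with constant rate 1 and r particles on a finite vertex set V,
  where particles move according to a transition kernel P (random-walk kernel of the graph):
  each occupied site x emits a particle at total rate 1, which moves to y with probability P x y.\<close>

definition zrp_configs :: "'v set \<Rightarrow> nat \<Rightarrow> ('v \<Rightarrow> nat) set" where
  "zrp_configs V r = {\<eta>. (\<forall>x. x \<notin> V \<longrightarrow> \<eta> x = 0) \<and> (\<Sum>x\<in>V. \<eta> x) = r}"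

definition zrp_move :: "('v \<Rightarrow> nat) \<Rightarrow> 'v \<Rightarrow> 'v \<Rightarrow> ('v \<Rightarrow> nat)" where
  "zrp_move \<eta> x y = (\<eta>(x := \<eta> x - 1)) (y := (\<eta>(x := \<eta> x - 1)) y + 1)"

text \<open>Stationary measure: uniform on configurations (rate-1 ZRP with symmetric kernel).\<close>

definition zrp_mean :: "'v set \<Rightarrow> nat \<Rightarrow> (('v \<Rightarrow> nat) \<Rightarrow> real) \<Rightarrow> real" where
  "zrp_mean V r f = (\<Sum>\<eta>\<in>zrp_configs V r. f \<eta>) / real (card (zrp_configs V r))"

definition zrp_var :: "'v set \<Rightarrow> nat \<Rightarrow> (('v \<Rightarrow> nat) \<Rightarrow> real) \<Rightarrow> real" where
  "zrp_var V r f = (\<Sum>\<eta>\<in>zrp_configs V r. (f \<eta> - zrp_mean V r f)^2) / real (card (zrp_configs V r))"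

text \<open>Dirichlet form E(f) = 1/2 sum_{eta,xi} pi(eta) q(eta,xi) (f xi - f eta)^2.\<close>

definition zrp_dirichlet :: "'v set \<Rightarrow> ('v \<Rightarrow> 'v \<Rightarrow> real) \<Rightarrow> nat \<Rightarrow> (('v \<Rightarrow> nat) \<Rightarrow> real) \<Rightarrow> real" where
  "zrp_dirichlet V P r f =
     (\<Sum>\<eta>\<in>zrp_configs V r. \<Sum>x\<in>V. \<Sum>y\<in>V.
        (if 0 < \<eta> x then P x y * (f (zrp_move \<eta> x y) - f \<eta>)^2 else 0))
     / (2 * real (card (zrp_configs V r)))"

text \<open>Spectral gap (variational characterisation for the reversible chain) and relaxation time.\<close>

definition zrp_gap :: "'v set \<Rightarrow> ('v \<Rightarrow> 'v \<Rightarrow> real) \<Rightarrow> nat \<Rightarrow> real" where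
  "zrp_gap V P r = Inf {zrp_dirichlet V P r f / zrp_var V r f | f. zrp_var V r f \<noteq> 0}"

definition zrp_relax :: "'v set \<Rightarrow> ('v \<Rightarrow> 'v \<Rightarrow> real) \<Rightarrow> nat \<Rightarrow> real" where
  "zrp_relax V P r = 1 / zrp_gap V P r"

definition torus_vertices :: "nat \<Rightarrow> nat \<Rightarrow> (nat \<Rightarrow> nat) set" where
  "torus_vertices d L = {x. (\<forall>i<d. x i < L) \<and> (\<forall>i. d \<le> i \<longrightarrow> x i = 0)}"

definition torus_adj :: "nat \<Rightarrow> nat \<Rightarrow> (nat \<Rightarrow> nat) \<Rightarrow> (nat \<Rightarrow> nat) \<Rightarrow> bool" where
  "torus_adj d L x y \<longleftrightarrow> (\<exists>i<d. (\<forall>j. j \<noteq> i \<longrightarrow> y j = x j) \<and>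
       (y i = (x i + 1) mod L \<or> x i = (y i + 1) mod L))"

text \<open>Simple random walk kernel on the torus (degree 2d when L >= 3).\<close>

definition torus_kernel :: "nat \<Rightarrow> nat \<Rightarrow> (nat \<Rightarrow> nat) \<Rightarrow> (nat \<Rightarrow> nat) \<Rightarrow> real" where
  "torus_kernel d L x y = (if torus_adj d L x y then 1 / (2 * real d) else 0)"

definition complete_kernel :: "nat \<Rightarrow> nat \<Rightarrow> nat \<Rightarrow> real" where
  "complete_kernel n x y = (if x \<noteq> y then 1 / (real n - 1) else 0)"

end

theory Submission
  imports Defs "HOL-Analysis.Convex"
begin

text \<open>Relabelling the torus by a bijection onto {0..<n}, both
  processes live on the same configurations with the same uniform stationary measure, so it
  suffices to bound the Dirichlet form of the complete graph by 2 d^2 L^2 times that of the torus.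
  A jump from x to y is routed along the canonical path that corrects the coordinates one after
  another by unit steps, at most d (L - 1) of them; Cauchy-Schwarz loses a factor d (L - 1). A
  unit jump of the torus occurs at a given position of at most n canonical paths, since together
  with the coordinates of the endpoints that the path has already overwritten or not yet reached
  it determines them; this loses a factor (L - 1) n. With the rates 1/(n - 1) and 1/(2 d) this
  gives the constant 2 d^2 (L - 1)^2 n / (n - 1) \<le> 2 d^2 L^2. As the complete graph has a
  positive spectral gap, the relaxation times compare in the same way.\<close>

lemma sum_sq_dist_mean_le:
  fixes g :: "'a \<Rightarrow> real"
  assumes "finite A" "A \<noteq> {}"
  shows "(\<Sum>a\<in>A. (g a - (\<Sum>b\<in>A. g b) / card A)\<^sup>2) \<le> (\<Sum>a\<in>A. (g a - c)\<^sup>2)"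
proof -
  define m where "m = (\<Sum>b\<in>A. g b) / card A"
  have "(\<Sum>a\<in>A. g a - m) = 0"
    using assms by (simp add: sum_subtractf m_def)
  have "(\<Sum>a\<in>A. (g a - c)\<^sup>2) = (\<Sum>a\<in>A. (g a - m)\<^sup>2 + 2 * (m - c) * (g a - m) + (m - c)\<^sup>2)"
    by (rule sum.cong) (auto simp: power2_eq_square algebra_simps)
  also have "\<dots> = (\<Sum>a\<in>A. (g a - m)\<^sup>2) + 2 * (m - c) * (\<Sum>a\<in>A. g a - m) + card A * (m - c)\<^sup>2"
    by (simp add: sum.distrib sum_distrib_left)
  finally have "(\<Sum>a\<in>A. (g a - c)\<^sup>2) = (\<Sum>a\<in>A. (g a - m)\<^sup>2) + card A * (m - c)\<^sup>2"
    using \<open>(\<Sum>a\<in>A. g a - m) = 0\<close> by simp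
  then show ?thesis unfolding m_def by simp
qed

lemma mod_add_right_cancel_less:
  fixes a b L s :: nat
  assumes "a < L" "b < L" "(a + s) mod L = (b + s) mod L"
  shows "a = b"
proof -
  have "(int a + int s) mod int L = (int b + int s) mod int L"
    using assms(3) by (metis of_nat_add of_nat_mod)
  then have "int L dvd int a - int b" by (simp add: mod_eq_dvd_iff)
  then show "a = b" using assms(1,2) dvd_imp_le_int[of "int a - int b" "int L"] by linarith
qed

lemma pred_sq_mult_le:
  fixes l m :: real
  assumes "1 \<le> l" "l \<le> m"
  shows "(l - 1)\<^sup>2 * m \<le> l\<^sup>2 * (m - 1)"
proof -
  have "l * (2 * l - 1) \<le> m * (2 * l - 1)" using assms by (intro mult_right_mono) auto
  moreover have "l \<le> l * l" using assms by simp
  ultimately show ?thesis by (simp add: power2_eq_square algebra_simps)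
qed

lemma finite_zrp_configs:
  assumes "finite V"
  shows "finite (zrp_configs V r)"
proof -
  have "zrp_configs V r \<subseteq> (\<lambda>g x. if x \<in> V then g x else 0) ` PiE V (\<lambda>_. {0..r})"
  proof
    fix \<eta> assume \<eta>: "\<eta> \<in> zrp_configs V r"
    have "\<eta> x \<le> r" if "x \<in> V" for x
      using \<eta> member_le_sum[OF that, of \<eta>] assms unfolding zrp_configs_def by auto
    then have "restrict \<eta> V \<in> PiE V (\<lambda>_. {0..r})" by auto
    moreover have "\<eta> = (\<lambda>x. if x \<in> V then restrict \<eta> V x else 0)"
      using \<eta> unfolding zrp_configs_def by auto
    ultimately show "\<eta> \<in> (\<lambda>g x. if x \<in> V then g x else 0) ` PiE V (\<lambda>_. {0..r})" by blast
  qed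
  then show ?thesis using assms by (meson finite_PiE finite_atLeastAtMost finite_surj)
qed

lemma point_in_zrp_configs:
  assumes "finite V" "v \<in> V"
  shows "(\<lambda>x. if x = v then r else 0) \<in> zrp_configs V r"
  using assms unfolding zrp_configs_def by auto

lemma card_zrp_configs_pos:
  assumes "finite V" "V \<noteq> {}"
  shows "0 < card (zrp_configs V r)"
  using assms point_in_zrp_configs finite_zrp_configs by (metis card_gt_0_iff ex_in_conv)

lemma zrp_move_in_zrp_configs:
  assumes "finite V" "\<eta> \<in> zrp_configs V r" "x \<in> V" "y \<in> V" "0 < \<eta> x"
  shows "zrp_move \<eta> x y \<in> zrp_configs V r"
proof -
  let ?\<eta>' = "\<eta>(x := \<eta> x - 1)"
  have "(\<Sum>z\<in>V. ?\<eta>' z) + 1 = (\<Sum>z\<in>V. \<eta> z)"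
    using assms by (simp add: sum.remove[of V x])
  moreover have "(\<Sum>z\<in>V. (?\<eta>'(y := ?\<eta>' y + 1)) z) = (\<Sum>z\<in>V. ?\<eta>' z) + 1"
    using assms by (simp add: sum.remove[of V y])
  ultimately show ?thesis
    using assms unfolding zrp_configs_def zrp_move_def by auto
qed

lemma zrp_configs_sum_remove:
  assumes "finite V" "v \<in> V" "\<eta> \<in> zrp_configs V r"
  shows "\<eta> v + (\<Sum>x\<in>V - {v}. \<eta> x) = r"
  using assms unfolding zrp_configs_def by (simp add: sum.remove)

lemma zrp_move_self: "0 < \<eta> x \<Longrightarrow> zrp_move \<eta> x x = \<eta>"
  by (auto simp: zrp_move_def)

lemma zrp_move_zrp_move: "0 < \<eta> x \<Longrightarrow> zrp_move (zrp_move \<eta> x y) y z = zrp_move \<eta> x z"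
  by (auto simp: zrp_move_def)

lemma zrp_move_back: "0 < \<eta> x \<Longrightarrow> zrp_move (zrp_move \<eta> x y) y x = \<eta>"
  by (simp add: zrp_move_zrp_move zrp_move_self)

lemma zrp_move_target_pos: "0 < zrp_move \<eta> x y y"
  by (simp add: zrp_move_def)

definition zrp_jumps :: "'v set \<Rightarrow> nat \<Rightarrow> (('v \<Rightarrow> nat) \<times> 'v \<times> 'v) set" where
  "zrp_jumps V r = {(\<eta>, x, y). \<eta> \<in> zrp_configs V r \<and> x \<in> V \<and> y \<in> V \<and> 0 < \<eta> x}"

definition zrp_jump_diff :: "(('v \<Rightarrow> nat) \<Rightarrow> real) \<Rightarrow> ('v \<Rightarrow> nat) \<times> 'v \<times> 'v \<Rightarrow> real" where
  "zrp_jump_diff f = (\<lambda>(\<eta>, x, y). f (zrp_move \<eta> x y) - f \<eta>)"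

lemma zrp_jump_diff_apply [simp]: "zrp_jump_diff f (\<eta>, x, y) = f (zrp_move \<eta> x y) - f \<eta>"
  by (simp add: zrp_jump_diff_def)

lemma finite_zrp_jumps: "finite V \<Longrightarrow> finite (zrp_jumps V r)"
proof -
  assume "finite V"
  then have "finite (zrp_configs V r \<times> V \<times> V)" by (simp add: finite_zrp_configs)
  moreover have "zrp_jumps V r \<subseteq> zrp_configs V r \<times> V \<times> V" unfolding zrp_jumps_def by auto
  ultimately show ?thesis by (rule finite_subset[rotated])
qed

lemma zrp_var_nonneg: "0 \<le> zrp_var V r f"
  unfolding zrp_var_def by (simp add: sum_nonneg)

lemma zrp_var_le_mean_sq_dist:
  assumes "finite V" "V \<noteq> {}"
  shows "zrp_var V r f \<le> (\<Sum>\<eta>\<in>zrp_configs V r. (f \<eta> - c)\<^sup>2) / card (zrp_configs V r)"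
  unfolding zrp_var_def zrp_mean_def
  using assms card_zrp_configs_pos[OF assms, of r]
  by (intro divide_right_mono sum_sq_dist_mean_le finite_zrp_configs) auto

lemma zrp_var_nonzero_exists:
  assumes "finite V" "a \<in> V" "b \<in> V" "a \<noteq> b" "1 \<le> r"
  shows "\<exists>f. zrp_var V r f \<noteq> 0"
proof
  define \<eta>a where "\<eta>a = (\<lambda>x. if x = a then r else 0)"
  define \<eta>b where "\<eta>b = (\<lambda>x. if x = b then r else 0)"
  let ?f = "\<lambda>\<eta>. if \<eta> = \<eta>a then 1 else 0 :: real"
  let ?\<Omega> = "zrp_configs V r"
  have in_\<Omega>: "\<eta>a \<in> ?\<Omega>" "\<eta>b \<in> ?\<Omega>"
    unfolding \<eta>a_def \<eta>b_def using assms point_in_zrp_configs by auto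
  have "\<eta>a a \<noteq> \<eta>b a" using assms unfolding \<eta>a_def \<eta>b_def by simp
  then have "?f \<eta>a \<noteq> ?f \<eta>b" by auto
  then obtain \<eta> where \<eta>: "\<eta> \<in> ?\<Omega>" "?f \<eta> \<noteq> zrp_mean V r ?f"
    using in_\<Omega> by metis
  have "(\<Sum>\<eta>\<in>?\<Omega>. (?f \<eta> - zrp_mean V r ?f)\<^sup>2) \<noteq> 0"
  proof
    assume "(\<Sum>\<eta>\<in>?\<Omega>. (?f \<eta> - zrp_mean V r ?f)\<^sup>2) = 0"
    then have "(?f \<eta> - zrp_mean V r ?f)\<^sup>2 = 0"
      using \<eta>(1) finite_zrp_configs[OF assms(1)] by (simp add: sum_nonneg_eq_0_iff)
    then show False using \<eta>(2) by simp
  qed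
  moreover have "card ?\<Omega> \<noteq> 0" using card_zrp_configs_pos assms by blast
  ultimately show "zrp_var V r ?f \<noteq> 0" unfolding zrp_var_def by simp
qed

lemma zrp_dirichlet_eq_sum_jumps:
  assumes "finite V"
  shows "zrp_dirichlet V P r f =
    (\<Sum>(\<eta>, x, y)\<in>zrp_jumps V r. P x y * (zrp_jump_diff f (\<eta>, x, y))\<^sup>2)
      / (2 * real (card (zrp_configs V r)))"
proof -
  let ?\<Omega> = "zrp_configs V r"
  have "(\<Sum>\<eta>\<in>?\<Omega>. \<Sum>x\<in>V. \<Sum>y\<in>V.
          if 0 < \<eta> x then P x y * (f (zrp_move \<eta> x y) - f \<eta>)\<^sup>2 else 0)
      = (\<Sum>(\<eta>, x, y)\<in>?\<Omega> \<times> V \<times> V.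
          if 0 < \<eta> x then P x y * (zrp_jump_diff f (\<eta>, x, y))\<^sup>2 else 0)"
    by (auto simp: sum.cartesian_product case_prod_unfold intro!: sum.cong)
  also have "\<dots> = (\<Sum>(\<eta>, x, y)\<in>zrp_jumps V r. P x y * (zrp_jump_diff f (\<eta>, x, y))\<^sup>2)"
    using assms
    by (intro sum.mono_neutral_cong_right)
      (auto simp: zrp_jumps_def finite_zrp_configs split: if_splits)
  finally show ?thesis unfolding zrp_dirichlet_def by simp
qed

lemma zrp_dirichlet_nonneg:
  assumes "\<And>x y. x \<in> V \<Longrightarrow> y \<in> V \<Longrightarrow> 0 \<le> P x y"
  shows "0 \<le> zrp_dirichlet V P r f"
  unfolding zrp_dirichlet_def using assms by (intro divide_nonneg_nonneg sum_nonneg) auto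

lemma zrp_dirichlet_mono:
  assumes "finite V" "\<And>x y. x \<in> V \<Longrightarrow> y \<in> V \<Longrightarrow> P x y \<le> c * Q x y"
  shows "zrp_dirichlet V P r f \<le> c * zrp_dirichlet V Q r f"
proof -
  have "(\<Sum>(\<eta>, x, y)\<in>zrp_jumps V r. P x y * (zrp_jump_diff f (\<eta>, x, y))\<^sup>2)
      \<le> (\<Sum>(\<eta>, x, y)\<in>zrp_jumps V r. c * Q x y * (zrp_jump_diff f (\<eta>, x, y))\<^sup>2)"
    using assms(2) by (intro sum_mono) (auto simp: zrp_jumps_def mult_right_mono)
  also have "\<dots> = c * (\<Sum>(\<eta>, x, y)\<in>zrp_jumps V r. Q x y * (zrp_jump_diff f (\<eta>, x, y))\<^sup>2)"
    by (simp add: sum_distrib_left case_prod_unfold mult.assoc)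
  finally show ?thesis
    using assms(1) by (simp add: zrp_dirichlet_eq_sum_jumps divide_right_mono)
qed

lemma zrp_dirichlet_cong:
  assumes "\<And>x y. x \<in> V \<Longrightarrow> y \<in> V \<Longrightarrow> P x y = Q x y"
  shows "zrp_dirichlet V P r f = zrp_dirichlet V Q r f"
  unfolding zrp_dirichlet_def using assms by (intro arg_cong2[where f = divide] sum.cong refl) auto

lemma zrp_jump_le_dirichlet:
  assumes "finite V" "(\<eta>, x, y) \<in> zrp_jumps V r" "\<And>x y. x \<in> V \<Longrightarrow> y \<in> V \<Longrightarrow> 0 \<le> P x y"
  shows "P x y * (zrp_jump_diff f (\<eta>, x, y))\<^sup>2 \<le> 2 * card (zrp_configs V r) * zrp_dirichlet V P r f"
proof -
  let ?g = "\<lambda>(\<eta>, x, y). P x y * (zrp_jump_diff f (\<eta>, x, y))\<^sup>2"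
  have "0 < card (zrp_configs V r)"
    using assms(1,2) card_zrp_configs_pos unfolding zrp_jumps_def by blast
  moreover have "?g (\<eta>, x, y) \<le> sum ?g (zrp_jumps V r)"
  proof (rule member_le_sum[OF assms(2)])
    fix t assume "t \<in> zrp_jumps V r - {(\<eta>, x, y)}"
    then show "0 \<le> ?g t" using assms(3) by (auto simp: zrp_jumps_def)
  qed (simp add: finite_zrp_jumps assms(1))
  ultimately show ?thesis
    using assms(1) by (simp add: zrp_dirichlet_eq_sum_jumps)
qed

section \<open>Relabelling of sites\<close>

definition zrp_pullback :: "'v set \<Rightarrow> ('v \<Rightarrow> 'w) \<Rightarrow> ('w \<Rightarrow> nat) \<Rightarrow> 'v \<Rightarrow> nat" where
  "zrp_pullback V h \<xi> = (\<lambda>x. if x \<in> V then \<xi> (h x) else 0)"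

lemma zrp_pullback_in_zrp_configs:
  assumes "bij_betw h V W" "\<xi> \<in> zrp_configs W r"
  shows "zrp_pullback V h \<xi> \<in> zrp_configs V r"
proof -
  have "(\<Sum>x\<in>V. \<xi> (h x)) = (\<Sum>a\<in>W. \<xi> a)"
    using assms(1) by (rule sum.reindex_bij_betw)
  then show ?thesis
    using assms(2) unfolding zrp_configs_def zrp_pullback_def by simp
qed

lemma bij_betw_zrp_pullback:
  assumes "bij_betw h V W"
  shows "bij_betw (zrp_pullback V h) (zrp_configs W r) (zrp_configs V r)"
proof -
  let ?g = "inv_into V h"
  have g: "bij_betw ?g W V" using assms by (rule bij_betw_inv_into)
  show ?thesis
  proof (rule bij_betw_byWitness[where f' = "zrp_pullback W ?g"])
    show "\<forall>\<xi>\<in>zrp_configs W r. zrp_pullback W ?g (zrp_pullback V h \<xi>) = \<xi>"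
      using assms bij_betw_inv_into_right[OF assms] inv_into_into[of _ h V]
      unfolding zrp_configs_def zrp_pullback_def bij_betw_def by fastforce
    show "\<forall>\<eta>\<in>zrp_configs V r. zrp_pullback V h (zrp_pullback W ?g \<eta>) = \<eta>"
      using assms bij_betw_inv_into_left[OF assms]
      unfolding zrp_configs_def zrp_pullback_def bij_betw_def by fastforce
  qed (use assms g zrp_pullback_in_zrp_configs in blast)+
qed

lemma zrp_pullback_zrp_move:
  assumes "inj_on h V" "x \<in> V" "y \<in> V"
  shows "zrp_pullback V h (zrp_move \<xi> (h x) (h y)) = zrp_move (zrp_pullback V h \<xi>) x y"
proof
  fix z
  show "zrp_pullback V h (zrp_move \<xi> (h x) (h y)) z = zrp_move (zrp_pullback V h \<xi>) x y z"
  proof (cases "z \<in> V")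
    case True
    then have "h z = h x \<longleftrightarrow> z = x" "h z = h y \<longleftrightarrow> z = y" "h y = h x \<longleftrightarrow> y = x"
      using assms by (auto dest: inj_onD)
    then show ?thesis using True assms unfolding zrp_pullback_def zrp_move_def by simp
  next
    case False
    then show ?thesis using assms unfolding zrp_pullback_def zrp_move_def by auto
  qed
qed

lemma zrp_var_pullback:
  assumes "bij_betw h V W"
  shows "zrp_var W r (f \<circ> zrp_pullback V h) = zrp_var V r f"
proof -
  let ?\<Phi> = "zrp_pullback V h"
  have \<Phi>: "bij_betw ?\<Phi> (zrp_configs W r) (zrp_configs V r)"
    using assms by (rule bij_betw_zrp_pullback)
  have sum: "(\<Sum>\<xi>\<in>zrp_configs W r. F (?\<Phi> \<xi>)) = (\<Sum>\<eta>\<in>zrp_configs V r. F \<eta>)" for F :: "_ \<Rightarrow> real"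
    using \<Phi> by (rule sum.reindex_bij_betw)
  have card: "card (zrp_configs W r) = card (zrp_configs V r)"
    using \<Phi> by (rule bij_betw_same_card)
  have "zrp_mean W r (f \<circ> ?\<Phi>) = zrp_mean V r f"
    unfolding zrp_mean_def card using sum[of f] by simp
  then show ?thesis
    unfolding zrp_var_def card using sum[of "\<lambda>\<eta>. (f \<eta> - zrp_mean V r f)\<^sup>2"] by simp
qed

lemma zrp_dirichlet_pullback:
  assumes "bij_betw h V W"
  shows "zrp_dirichlet W P r (f \<circ> zrp_pullback V h) = zrp_dirichlet V (\<lambda>x y. P (h x) (h y)) r f"
proof -
  let ?\<Phi> = "zrp_pullback V h"
  have inj: "inj_on h V" using assms by (rule bij_betw_imp_inj_on)
  have \<Phi>: "bij_betw ?\<Phi> (zrp_configs W r) (zrp_configs V r)"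
    using assms by (rule bij_betw_zrp_pullback)
  have sum2: "(\<Sum>a\<in>W. \<Sum>b\<in>W. G a b) = (\<Sum>x\<in>V. \<Sum>y\<in>V. G (h x) (h y))" for G :: "_ \<Rightarrow> _ \<Rightarrow> real"
  proof -
    have "(\<Sum>a\<in>W. \<Sum>b\<in>W. G a b) = (\<Sum>x\<in>V. \<Sum>b\<in>W. G (h x) b)"
      by (rule sum.reindex_bij_betw[OF assms, symmetric])
    also have "\<dots> = (\<Sum>x\<in>V. \<Sum>y\<in>V. G (h x) (h y))"
      by (intro sum.cong refl) (rule sum.reindex_bij_betw[OF assms, symmetric])
    finally show ?thesis .
  qed
  have "(\<Sum>\<xi>\<in>zrp_configs W r. \<Sum>a\<in>W. \<Sum>b\<in>W.
          if 0 < \<xi> a then P a b * (f (?\<Phi> (zrp_move \<xi> a b)) - f (?\<Phi> \<xi>))\<^sup>2 else 0)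
      = (\<Sum>\<xi>\<in>zrp_configs W r. \<Sum>x\<in>V. \<Sum>y\<in>V.
          if 0 < ?\<Phi> \<xi> x then P (h x) (h y) * (f (zrp_move (?\<Phi> \<xi>) x y) - f (?\<Phi> \<xi>))\<^sup>2 else 0)"
    unfolding sum2 using inj
    by (intro sum.cong refl) (simp add: zrp_pullback_zrp_move, simp add: zrp_pullback_def)
  also have "\<dots> = (\<Sum>\<eta>\<in>zrp_configs V r. \<Sum>x\<in>V. \<Sum>y\<in>V.
          if 0 < \<eta> x then P (h x) (h y) * (f (zrp_move \<eta> x y) - f \<eta>)\<^sup>2 else 0)"
    using \<Phi> by (rule sum.reindex_bij_betw)
  finally show ?thesis
    unfolding zrp_dirichlet_def bij_betw_same_card[OF \<Phi>] comp_def by simp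
qed

lemma zrp_gap_relabel:
  assumes "bij_betw h V W"
  shows "zrp_gap W P r = zrp_gap V (\<lambda>x y. P (h x) (h y)) r"
proof -
  let ?g = "inv_into V h"
  have g: "bij_betw ?g W V" using assms by (rule bij_betw_inv_into)
  have "{zrp_dirichlet W P r f / zrp_var W r f | f. zrp_var W r f \<noteq> 0}
      = {zrp_dirichlet V (\<lambda>x y. P (h x) (h y)) r f / zrp_var V r f | f. zrp_var V r f \<noteq> 0}"
  proof (intro set_eqI iffI; elim CollectE exE conjE)
    fix q f assume q: "q = zrp_dirichlet W P r f / zrp_var W r f" "zrp_var W r f \<noteq> 0"
    let ?f' = "f \<circ> zrp_pullback W ?g"
    have var: "zrp_var V r ?f' = zrp_var W r f"
      using g by (rule zrp_var_pullback)
    have dirichlet: "zrp_dirichlet V (\<lambda>x y. P (h x) (h y)) r ?f' = zrp_dirichlet W P r f"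
      unfolding zrp_dirichlet_pullback[OF g]
      by (rule zrp_dirichlet_cong) (simp add: bij_betw_inv_into_right[OF assms])
    show "q \<in> {zrp_dirichlet V (\<lambda>x y. P (h x) (h y)) r f / zrp_var V r f | f. zrp_var V r f \<noteq> 0}"
      using q var dirichlet by (intro CollectI exI[where x = ?f']) simp
  next
    fix q f
    assume "q = zrp_dirichlet V (\<lambda>x y. P (h x) (h y)) r f / zrp_var V r f" "zrp_var V r f \<noteq> 0"
    then show "q \<in> {zrp_dirichlet W P r f / zrp_var W r f | f. zrp_var W r f \<noteq> 0}"
      using zrp_var_pullback[OF assms] zrp_dirichlet_pullback[OF assms]
      by (intro CollectI exI[where x = "f \<circ> zrp_pullback V h"]) simp
  qed
  then show ?thesis unfolding zrp_gap_def by simp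
qed

lemma zrp_gap_le_quotient:
  assumes "\<And>x y. x \<in> V \<Longrightarrow> y \<in> V \<Longrightarrow> 0 \<le> P x y" "zrp_var V r f \<noteq> 0"
  shows "zrp_gap V P r \<le> zrp_dirichlet V P r f / zrp_var V r f"
  unfolding zrp_gap_def
proof (rule cInf_lower)
  show "bdd_below {zrp_dirichlet V P r f / zrp_var V r f | f. zrp_var V r f \<noteq> 0}"
    using zrp_dirichlet_nonneg[of V P, OF assms(1)] zrp_var_nonneg
    by (intro bdd_belowI[where m = 0]) (auto intro!: divide_nonneg_nonneg)
qed (use assms(2) in blast)

lemma zrp_gap_ge_of_poincare:
  assumes "\<exists>f. zrp_var V r f \<noteq> 0" "0 < c" "\<And>f. zrp_var V r f \<le> c * zrp_dirichlet V P r f"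
  shows "1 / c \<le> zrp_gap V P r"
  unfolding zrp_gap_def
proof (rule cInf_greatest)
  fix q assume "q \<in> {zrp_dirichlet V P r f / zrp_var V r f | f. zrp_var V r f \<noteq> 0}"
  then obtain f where q: "q = zrp_dirichlet V P r f / zrp_var V r f" and "zrp_var V r f \<noteq> 0"
    by blast
  then have "0 < zrp_var V r f" using zrp_var_nonneg by (metis less_eq_real_def)
  then show "1 / c \<le> q"
    unfolding q using assms(2) assms(3)[of f] by (simp add: field_simps)
qed (use assms(1) in blast)

lemma zrp_relax_le_of_dirichlet_le:
  assumes P: "\<And>x y. x \<in> V \<Longrightarrow> y \<in> V \<Longrightarrow> 0 \<le> P x y"
    and gap: "0 < zrp_gap V P r" and C: "0 < C" and nontrivial: "\<exists>f. zrp_var V r f \<noteq> 0"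
    and comparison: "\<And>f. zrp_dirichlet V P r f \<le> C * zrp_dirichlet V Q r f"
  shows "zrp_relax V Q r \<le> C * zrp_relax V P r"
proof -
  let ?g = "zrp_gap V P r"
  have "zrp_var V r f \<le> C / ?g * zrp_dirichlet V Q r f" for f
  proof (cases "zrp_var V r f = 0")
    case True
    have "0 \<le> C * zrp_dirichlet V Q r f"
      using zrp_dirichlet_nonneg[of V P, OF P] comparison by (rule order_trans)
    then show ?thesis using True C gap by (simp add: zero_le_mult_iff)
  next
    case False
    then have "?g * zrp_var V r f \<le> zrp_dirichlet V P r f"
      using zrp_gap_le_quotient[OF P False] zrp_var_nonneg[of V r f]
      by (simp add: le_divide_eq)
    then show ?thesis
      using comparison[of f] gap by (simp add: field_simps)
  qed
  then have "1 / (C / ?g) \<le> zrp_gap V Q r"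
    using C gap nontrivial by (intro zrp_gap_ge_of_poincare) auto
  then have Q: "?g / C \<le> zrp_gap V Q r" by simp
  then have "0 < zrp_gap V Q r" using gap C by (meson divide_pos_pos less_le_trans)
  then show ?thesis using Q
    unfolding zrp_relax_def using C gap by (simp add: field_simps)
qed

section \<open>The complete graph\<close>

lemma zrp_var_le_dirichlet_of_hub:
  assumes V: "finite V" "v \<in> V" and p: "0 < p" "\<And>x. x \<in> V \<Longrightarrow> x \<noteq> v \<Longrightarrow> p \<le> P x v"
    and P: "\<And>x y. x \<in> V \<Longrightarrow> y \<in> V \<Longrightarrow> 0 \<le> P x y"
  shows "zrp_var V r f \<le> 4 ^ r / p * (2 * card (zrp_configs V r)) * zrp_dirichlet V P r f"
proof -
  let ?\<Omega> = "zrp_configs V r"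
  define \<eta>\<^sub>0 where "\<eta>\<^sub>0 = (\<lambda>x. if x = v then r else 0)"
  define S where "S = 2 * card ?\<Omega> * zrp_dirichlet V P r f / p"
  have S: "0 \<le> S"
    unfolding S_def using zrp_dirichlet_nonneg[of V P, OF P] p by simp
  have jump: "(f (zrp_move \<eta> x v) - f \<eta>)\<^sup>2 \<le> S"
    if "\<eta> \<in> ?\<Omega>" "x \<in> V" "x \<noteq> v" "0 < \<eta> x" for \<eta> x
  proof -
    have "p * (f (zrp_move \<eta> x v) - f \<eta>)\<^sup>2 \<le> P x v * (f (zrp_move \<eta> x v) - f \<eta>)\<^sup>2"
      using p that by (intro mult_right_mono) auto
    also have "\<dots> \<le> 2 * card ?\<Omega> * zrp_dirichlet V P r f"
      using zrp_jump_le_dirichlet[where P = P, OF V(1) _ P] that V by (simp add: zrp_jumps_def)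
    finally show ?thesis unfolding S_def using p by (simp add: field_simps)
  qed
  have to_hub: "(f \<eta> - f \<eta>\<^sub>0)\<^sup>2 \<le> 4 ^ (r - \<eta> v) * S" if "\<eta> \<in> ?\<Omega>" for \<eta>
    using that
  proof (induction "r - \<eta> v" arbitrary: \<eta>)
    case 0
    then have "\<eta> v = r" using zrp_configs_sum_remove[OF V 0(2)] by simp
    then have "\<eta> = \<eta>\<^sub>0"
      using zrp_configs_sum_remove[OF V 0(2)] 0(2) V(1)
      unfolding \<eta>\<^sub>0_def zrp_configs_def by (auto simp: fun_eq_iff)
    then show ?case using S by simp
  next
    case (Suc m)
    then have "(\<Sum>x\<in>V - {v}. \<eta> x) \<noteq> 0" using zrp_configs_sum_remove[OF V Suc(3)] by simp
    then obtain x where x: "x \<in> V" "x \<noteq> v" "0 < \<eta> x" by (metis DiffE gr0I singletonI sum.neutral)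
    define \<eta>' where "\<eta>' = zrp_move \<eta> x v"
    have \<eta>': "\<eta>' \<in> ?\<Omega>"
      unfolding \<eta>'_def using V Suc(3) x by (intro zrp_move_in_zrp_configs) auto
    have "m = r - \<eta>' v" using Suc(2) x unfolding \<eta>'_def zrp_move_def by simp
    then have IH: "(f \<eta>' - f \<eta>\<^sub>0)\<^sup>2 \<le> 4 ^ m * S" using Suc(1) \<eta>' by blast
    have "2 * (f \<eta>' - f \<eta>)\<^sup>2 + 2 * (f \<eta>' - f \<eta>\<^sub>0)\<^sup>2 - (f \<eta> - f \<eta>\<^sub>0)\<^sup>2
        = (2 * f \<eta>' - f \<eta> - f \<eta>\<^sub>0)\<^sup>2"
      by (simp add: power2_eq_square algebra_simps)
    then have "(f \<eta> - f \<eta>\<^sub>0)\<^sup>2 \<le> 2 * (f \<eta>' - f \<eta>)\<^sup>2 + 2 * (f \<eta>' - f \<eta>\<^sub>0)\<^sup>2"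
      by (metis diff_ge_0_iff_ge zero_le_power2)
    also have "\<dots> \<le> 2 * S + 2 * (4 ^ m * S)"
      using jump[OF Suc(3) x] IH unfolding \<eta>'_def by simp
    also have "\<dots> \<le> 4 ^ Suc m * S"
      using S mult_left_mono[OF one_le_power[of 4 m], of S] by simp
    finally show ?case using Suc(2) by simp
  qed
  have "zrp_var V r f \<le> (\<Sum>\<eta>\<in>?\<Omega>. (f \<eta> - f \<eta>\<^sub>0)\<^sup>2) / card ?\<Omega>"
    using V by (intro zrp_var_le_mean_sq_dist) auto
  also have "\<dots> \<le> (\<Sum>\<eta>\<in>?\<Omega>. 4 ^ r * S) / card ?\<Omega>"
    using to_hub S by (intro divide_right_mono sum_mono order_trans[OF to_hub] mult_right_mono) auto
  also have "\<dots> \<le> 4 ^ r * S" using S by simp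
  finally show ?thesis unfolding S_def by (simp add: field_simps)
qed

lemma zrp_gap_pos_of_hub:
  assumes V: "finite V" "v \<in> V" and p: "0 < p" "\<And>x. x \<in> V \<Longrightarrow> x \<noteq> v \<Longrightarrow> p \<le> P x v"
    and P: "\<And>x y. x \<in> V \<Longrightarrow> y \<in> V \<Longrightarrow> 0 \<le> P x y" and nontrivial: "\<exists>f. zrp_var V r f \<noteq> 0"
  shows "0 < zrp_gap V P r"
proof -
  let ?c = "4 ^ r / p * (2 * card (zrp_configs V r))"
  have "0 < card (zrp_configs V r)" using V card_zrp_configs_pos by blast
  then have "0 < ?c" using p by simp
  then have "1 / ?c \<le> zrp_gap V P r"
    using zrp_var_le_dirichlet_of_hub[where P = P, OF V p P] nontrivial
    by (intro zrp_gap_ge_of_poincare) auto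
  then show ?thesis using \<open>0 < ?c\<close> by (meson less_le_trans zero_less_divide_1_iff)
qed

lemma zrp_gap_complete_pos:
  assumes "2 \<le> n" "1 \<le> r"
  shows "0 < zrp_gap {0..<n} (complete_kernel n) r"
proof (rule zrp_gap_pos_of_hub[where v = 0 and p = "1 / (real n - 1)"])
  show "\<exists>f. zrp_var {0..<n} r f \<noteq> 0"
    using assms by (intro zrp_var_nonzero_exists[of _ 0 1]) auto
qed (use assms in \<open>auto simp: complete_kernel_def\<close>)

section \<open>Canonical paths on the torus\<close>

lemma finite_torus_vertices: "finite (torus_vertices d L)"
  and card_torus_vertices: "card (torus_vertices d L) = L ^ d"
proof -
  have "bij_betw (\<lambda>x. restrict x {..<d}) (torus_vertices d L) (PiE {..<d} (\<lambda>_. {..<L}))"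
  proof (rule bij_betw_byWitness[where f' = "\<lambda>g i. if i < d then g i else 0"])
    show "(\<lambda>g i. if i < d then g i else 0) ` PiE {..<d} (\<lambda>_. {..<L}) \<subseteq> torus_vertices d L"
      unfolding torus_vertices_def by (auto simp: PiE_def Pi_def)
  qed (auto simp: torus_vertices_def PiE_def Pi_def extensional_def)
  then show "finite (torus_vertices d L)" "card (torus_vertices d L) = L ^ d"
    using bij_betw_finite bij_betw_same_card by (fastforce simp: card_PiE)+
qed

lemma zrp_var_nonzero_exists_torus:
  assumes "1 \<le> d" "2 \<le> L" "1 \<le> r"
  shows "\<exists>f. zrp_var (torus_vertices d L) r f \<noteq> 0"
proof -
  have "(\<lambda>_. 0) \<in> torus_vertices d L" "(\<lambda>i. if i = 0 then 1 else 0) \<in> torus_vertices d L"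
    "(\<lambda>_. 0) \<noteq> (\<lambda>i::nat. if i = 0 then 1 else 0 :: nat)"
    using assms by (auto simp: torus_vertices_def fun_eq_iff)
  then show ?thesis using finite_torus_vertices assms(3) by (intro zrp_var_nonzero_exists)
qed

definition torus_step :: "nat \<Rightarrow> nat \<Rightarrow> (nat \<Rightarrow> nat) \<Rightarrow> nat \<Rightarrow> nat" where
  "torus_step L j u = u(j := (u j + 1) mod L)"

lemma torus_step_in_torus_vertices:
  "u \<in> torus_vertices d L \<Longrightarrow> j < d \<Longrightarrow> torus_step L j u \<in> torus_vertices d L"
  unfolding torus_vertices_def torus_step_def by auto

lemma torus_adj_torus_step: "j < d \<Longrightarrow> torus_adj d L u (torus_step L j u)"
  unfolding torus_adj_def torus_step_def by auto

lemma inj_on_torus_step: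
  assumes "u \<in> torus_vertices d L" "2 \<le> L"
  shows "inj_on (\<lambda>j. torus_step L j u) {..<d}"
proof (rule inj_onI)
  fix i j assume i: "i \<in> {..<d}" and eq: "torus_step L i u = torus_step L j u"
  have "u i < L" using assms(1) i unfolding torus_vertices_def by auto
  then have "(u i + 1) mod L \<noteq> u i" using assms(2) by (cases "u i + 1 = L") auto
  then show "i = j" using fun_cong[OF eq, of i] unfolding torus_step_def by (auto split: if_splits)
qed

lemma sum_torus_step_indicator_le:
  assumes "x \<in> torus_vertices d L" "2 \<le> L"
  shows "(\<Sum>j<d. if y = torus_step L j x then 1 else 0 :: real) \<le> 2 * d * torus_kernel d L x y"
proof (cases "\<exists>j<d. y = torus_step L j x")
  case True
  then obtain j where j: "j < d" "y = torus_step L j x" by blast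
  have "(\<Sum>i<d. if y = torus_step L i x then 1 else 0 :: real) = (\<Sum>i<d. if i = j then 1 else 0)"
    using inj_on_torus_step[OF assms] j by (intro sum.cong) (auto dest: inj_onD)
  also have "\<dots> = 2 * d * torus_kernel d L x y"
    using j torus_adj_torus_step[of j d L x] unfolding torus_kernel_def by simp
  finally show ?thesis by simp
next
  case False
  then show ?thesis by (simp add: torus_kernel_def)
qed

text \<open>The canonical path from x to y corrects the coordinates in increasing order, each by unit
  steps in the positive direction: torus_path L x y j s is the point reached after s of the
  torus_path_len L x y j steps in coordinate j.\<close>

definition torus_path :: "nat \<Rightarrow> (nat \<Rightarrow> nat) \<Rightarrow> (nat \<Rightarrow> nat) \<Rightarrow> nat \<Rightarrow> nat \<Rightarrow> nat \<Rightarrow> nat" where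
  "torus_path L x y j s = (\<lambda>k. if k < j then y k else if k = j then (x j + s) mod L else x k)"

definition torus_path_len :: "nat \<Rightarrow> (nat \<Rightarrow> nat) \<Rightarrow> (nat \<Rightarrow> nat) \<Rightarrow> nat \<Rightarrow> nat" where
  "torus_path_len L x y j = (y j + L - x j) mod L"

lemma torus_vertices_mod: "x \<in> torus_vertices d L \<Longrightarrow> x k mod L = x k"
  unfolding torus_vertices_def by (cases "k < d") auto

lemma torus_path_in_torus_vertices:
  "x \<in> torus_vertices d L \<Longrightarrow> y \<in> torus_vertices d L \<Longrightarrow> j < d \<Longrightarrow> 0 < L
    \<Longrightarrow> torus_path L x y j s \<in> torus_vertices d L"
  unfolding torus_vertices_def torus_path_def by auto

lemma torus_path_start: "x \<in> torus_vertices d L \<Longrightarrow> torus_path L x y 0 0 = x"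
  using torus_vertices_mod unfolding torus_path_def by auto

lemma torus_path_end:
  "x \<in> torus_vertices d L \<Longrightarrow> y \<in> torus_vertices d L \<Longrightarrow> torus_path L x y d 0 = y"
  unfolding torus_vertices_def torus_path_def by auto

lemma torus_path_Suc: "torus_path L x y j (Suc s) = torus_step L j (torus_path L x y j s)"
  unfolding torus_path_def torus_step_def by (auto simp: mod_Suc_eq)

lemma torus_path_len_le: "0 < L \<Longrightarrow> torus_path_len L x y j \<le> L - 1"
  unfolding torus_path_len_def using less_Suc_eq_le by fastforce

lemma torus_path_next_coordinate:
  assumes "x \<in> torus_vertices d L" "y \<in> torus_vertices d L" "j < d"
  shows "torus_path L x y j (torus_path_len L x y j) = torus_path L x y (Suc j) 0"
proof -
  have "x j < L" "y j < L" using assms unfolding torus_vertices_def by auto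
  then have "(x j + torus_path_len L x y j) mod L = y j"
    unfolding torus_path_len_def by (simp add: mod_add_right_eq)
  then show ?thesis
    using torus_vertices_mod[OF assms(1)] unfolding torus_path_def by (auto simp: less_Suc_eq)
qed

text \<open>The coordinates of x and y that cannot be read off torus_path L x y j s: together with
  that point, they determine the endpoints x and y.\<close>

definition torus_path_code :: "(nat \<Rightarrow> nat) \<Rightarrow> (nat \<Rightarrow> nat) \<Rightarrow> nat \<Rightarrow> nat \<Rightarrow> nat" where
  "torus_path_code x y j = (\<lambda>k. if k < j then x k else y k)"

lemma torus_path_code_in_torus_vertices:
  "x \<in> torus_vertices d L \<Longrightarrow> y \<in> torus_vertices d L \<Longrightarrow> torus_path_code x y j \<in> torus_vertices d L"
  unfolding torus_vertices_def torus_path_code_def by auto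

lemma torus_path_code_inj:
  assumes "x \<in> torus_vertices d L" "x' \<in> torus_vertices d L" "j < d"
    and path: "torus_path L x y j s = torus_path L x' y' j s"
    and code: "torus_path_code x y j = torus_path_code x' y' j"
  shows "x = x' \<and> y = y'"
proof -
  have "x j < L" "x' j < L" using assms(1-3) unfolding torus_vertices_def by auto
  then have "x j = x' j"
    using fun_cong[OF path, of j] mod_add_right_cancel_less unfolding torus_path_def by auto
  then have "x k = x' k \<and> y k = y' k" for k
    using fun_cong[OF path, of k] fun_cong[OF code, of k]
    unfolding torus_path_def torus_path_code_def by (auto split: if_splits)
  then show ?thesis by auto
qed

text \<open>The unit jump made at step s in coordinate j when, starting from \<eta>, a particle at x
  travels along its canonical path to y; only this particle has moved so far.\<close>

definition torus_path_jump ::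
  "nat \<Rightarrow> ((nat \<Rightarrow> nat) \<Rightarrow> nat) \<Rightarrow> (nat \<Rightarrow> nat) \<Rightarrow> (nat \<Rightarrow> nat) \<Rightarrow> nat \<Rightarrow> nat
    \<Rightarrow> ((nat \<Rightarrow> nat) \<Rightarrow> nat) \<times> (nat \<Rightarrow> nat) \<times> (nat \<Rightarrow> nat)" where
  "torus_path_jump L \<eta> x y j s =
    (let z = torus_path L x y j s in (zrp_move \<eta> x z, z, torus_step L j z))"

lemma torus_path_jump_in_zrp_jumps:
  assumes "(\<eta>, x, y) \<in> zrp_jumps (torus_vertices d L) r" "j < d" "0 < L"
  shows "torus_path_jump L \<eta> x y j s \<in> zrp_jumps (torus_vertices d L) r"
  using assms torus_path_in_torus_vertices[of x d L y j s]
    torus_step_in_torus_vertices[OF torus_path_in_torus_vertices[of x d L y j s]]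
  unfolding zrp_jumps_def torus_path_jump_def
  by (auto simp: Let_def finite_torus_vertices zrp_move_in_zrp_configs zrp_move_target_pos)

lemma inj_on_torus_path_jump:
  assumes "j < d"
  shows "inj_on (\<lambda>(\<eta>, x, y). (torus_path_jump L \<eta> x y j s, torus_path_code x y j))
    (zrp_jumps (torus_vertices d L) r)"
proof (rule inj_onI, clarify)
  fix \<eta> x y \<eta>' x' y'
  assume "(\<eta>, x, y) \<in> zrp_jumps (torus_vertices d L) r"
    and "(\<eta>', x', y') \<in> zrp_jumps (torus_vertices d L) r"
    and jump: "torus_path_jump L \<eta> x y j s = torus_path_jump L \<eta>' x' y' j s"
    and code: "torus_path_code x y j = torus_path_code x' y' j"
  then have jumps: "x \<in> torus_vertices d L" "x' \<in> torus_vertices d L" "0 < \<eta> x" "0 < \<eta>' x'"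
    unfolding zrp_jumps_def by auto
  let ?z = "torus_path L x y j s"
  have "?z = torus_path L x' y' j s"
    using jump unfolding torus_path_jump_def by (simp add: Let_def)
  then have xy: "x = x'" "y = y'"
    using torus_path_code_inj[OF jumps(1,2) assms _ code] by blast+
  have "zrp_move \<eta> x ?z = zrp_move \<eta>' x ?z"
    using jump unfolding torus_path_jump_def xy by (simp add: Let_def)
  then have "zrp_move (zrp_move \<eta> x ?z) ?z x = zrp_move (zrp_move \<eta>' x ?z) ?z x" by simp
  then have "\<eta> = \<eta>'" using jumps by (simp add: zrp_move_back xy)
  then show "\<eta> = \<eta>' \<and> (x, y) = (x', y')" using xy by simp
qed

lemma zrp_jump_diff_eq_sum_torus_path:
  assumes "x \<in> torus_vertices d L" "y \<in> torus_vertices d L" "0 < \<eta> x"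
  shows "zrp_jump_diff f (\<eta>, x, y)
    = (\<Sum>j<d. \<Sum>s<torus_path_len L x y j. zrp_jump_diff f (torus_path_jump L \<eta> x y j s))"
proof -
  define G where "G j s = f (zrp_move \<eta> x (torus_path L x y j s))" for j s
  have step: "zrp_jump_diff f (torus_path_jump L \<eta> x y j s) = G j (Suc s) - G j s" for j s
    unfolding G_def torus_path_jump_def using assms(3)
    by (simp add: Let_def zrp_move_zrp_move torus_path_Suc)
  have "(\<Sum>j<d. \<Sum>s<torus_path_len L x y j. zrp_jump_diff f (torus_path_jump L \<eta> x y j s))
      = (\<Sum>j<d. G j (torus_path_len L x y j) - G j 0)"
    unfolding step sum_lessThan_telescope ..
  also have "\<dots> = (\<Sum>j<d. G (Suc j) 0 - G j 0)"
    unfolding G_def by (intro sum.cong) (simp_all add: torus_path_next_coordinate[OF assms(1,2)])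
  also have "\<dots> = G d 0 - G 0 0"
    by (rule sum_lessThan_telescope)
  also have "\<dots> = zrp_jump_diff f (\<eta>, x, y)"
    unfolding G_def
    using torus_path_start[OF assms(1)] torus_path_end[OF assms(1,2)] assms(3)
    by (simp add: zrp_move_self)
  finally show ?thesis ..
qed

lemma zrp_jump_diff_sq_le_torus_path:
  assumes "x \<in> torus_vertices d L" "y \<in> torus_vertices d L" "0 < \<eta> x" "0 < L"
  shows "(zrp_jump_diff f (\<eta>, x, y))\<^sup>2
    \<le> real d * real (L - 1) *
      (\<Sum>j<d. \<Sum>s<L - 1. (zrp_jump_diff f (torus_path_jump L \<eta> x y j s))\<^sup>2)"
proof -
  let ?D = "\<lambda>j s. zrp_jump_diff f (torus_path_jump L \<eta> x y j s)"
  define A where "A j = (\<Sum>s<torus_path_len L x y j. ?D j s)" for j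
  have A: "(A j)\<^sup>2 \<le> real (L - 1) * (\<Sum>s<L - 1. (?D j s)\<^sup>2)" for j
  proof -
    have len: "torus_path_len L x y j \<le> L - 1" using assms(4) by (rule torus_path_len_le)
    have "(A j)\<^sup>2 \<le> (\<Sum>s<torus_path_len L x y j. (?D j s)\<^sup>2) * torus_path_len L x y j"
      unfolding A_def using sum_squared_le_sum_of_squares[of "?D j" "{..<torus_path_len L x y j}"]
      by simp
    also have "\<dots> \<le> (\<Sum>s<L - 1. (?D j s)\<^sup>2) * real (L - 1)"
      using len by (intro mult_mono sum_mono2 sum_nonneg) auto
    finally show ?thesis by (simp add: mult.commute)
  qed
  have "(zrp_jump_diff f (\<eta>, x, y))\<^sup>2 = (\<Sum>j<d. A j)\<^sup>2"
    unfolding A_def zrp_jump_diff_eq_sum_torus_path[where \<eta> = \<eta> and f = f, OF assms(1-3)] ..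
  also have "\<dots> \<le> (\<Sum>j<d. (A j)\<^sup>2) * d"
    using sum_squared_le_sum_of_squares[of A "{..<d}"] by simp
  also have "\<dots> \<le> (\<Sum>j<d. real (L - 1) * (\<Sum>s<L - 1. (?D j s)\<^sup>2)) * d"
    using A by (intro mult_right_mono sum_mono) auto
  also have "\<dots> = real d * real (L - 1) * (\<Sum>j<d. \<Sum>s<L - 1. (?D j s)\<^sup>2)"
    by (simp add: sum_distrib_left algebra_simps)
  finally show ?thesis .
qed

text \<open>Congestion bound: the jumps made at a fixed position of the canonical paths are all
  distinct once they are tagged with torus_path_code, so each edge of the torus carries at most
  as many of them as there are vertices.\<close>

lemma sum_torus_path_jump_le:
  assumes "j < d" "0 < L"
  shows "(\<Sum>(\<eta>, x, y)\<in>zrp_jumps (torus_vertices d L) r.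
            (zrp_jump_diff f (torus_path_jump L \<eta> x y j s))\<^sup>2)
    \<le> real L ^ d * (\<Sum>(\<eta>, x, y)\<in>zrp_jumps (torus_vertices d L) r.
            if y = torus_step L j x then (zrp_jump_diff f (\<eta>, x, y))\<^sup>2 else 0)"
proof -
  let ?V = "torus_vertices d L"
  let ?J = "zrp_jumps ?V r"
  let ?\<Psi> = "\<lambda>(\<eta>, x, y). (torus_path_jump L \<eta> x y j s, torus_path_code x y j)"
  let ?H = "\<lambda>(\<eta>, x, y). if y = torus_step L j x then (zrp_jump_diff f (\<eta>, x, y))\<^sup>2 else 0"
  let ?G = "\<lambda>(t, w :: nat \<Rightarrow> nat). ?H t"
  have image: "?\<Psi> ` ?J \<subseteq> ?J \<times> ?V"
  proof (rule image_subsetI)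
    fix t assume t: "t \<in> ?J"
    then obtain \<eta> x y where t_eq: "t = (\<eta>, x, y)" and xy: "x \<in> ?V" "y \<in> ?V"
      unfolding zrp_jumps_def by auto
    from xy have "torus_path_code x y j \<in> ?V" by (rule torus_path_code_in_torus_vertices)
    moreover have "torus_path_jump L \<eta> x y j s \<in> ?J"
      using t unfolding t_eq by (rule torus_path_jump_in_zrp_jumps[OF _ assms])
    ultimately show "?\<Psi> t \<in> ?J \<times> ?V" unfolding t_eq by simp
  qed
  have "(\<Sum>(\<eta>, x, y)\<in>?J. (zrp_jump_diff f (torus_path_jump L \<eta> x y j s))\<^sup>2) = sum (?G \<circ> ?\<Psi>) ?J"
    by (intro sum.cong) (auto simp: torus_path_jump_def Let_def)
  also have "\<dots> = sum ?G (?\<Psi> ` ?J)"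
    using inj_on_torus_path_jump[OF assms(1)] by (simp add: sum.reindex)
  also have "\<dots> \<le> sum ?G (?J \<times> ?V)"
    using image by (intro sum_mono2) (auto simp: finite_zrp_jumps finite_torus_vertices)
  also have "\<dots> = (\<Sum>t\<in>?J. \<Sum>w\<in>?V. ?H t)"
    by (rule sum.cartesian_product[symmetric])
  also have "\<dots> = real L ^ d * sum ?H ?J"
    by (simp add: card_torus_vertices sum_distrib_left)
  finally show ?thesis .
qed

lemma zrp_dirichlet_ones_le_torus:
  assumes "2 \<le> L"
  shows "zrp_dirichlet (torus_vertices d L) (\<lambda>_ _. 1) r f
    \<le> 2 * real d ^ 2 * real (L - 1) ^ 2 * real L ^ d *
      zrp_dirichlet (torus_vertices d L) (torus_kernel d L) r f"
proof -
  let ?V = "torus_vertices d L"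
  let ?J = "zrp_jumps ?V r"
  let ?D = "\<lambda>t. (zrp_jump_diff f t)\<^sup>2"
  let ?E = "\<lambda>j. \<Sum>(\<eta>, x, y)\<in>?J. if y = torus_step L j x then ?D (\<eta>, x, y) else 0"
  have "(\<Sum>(\<eta>, x, y)\<in>?J. ?D (\<eta>, x, y))
      \<le> (\<Sum>(\<eta>, x, y)\<in>?J. real d * real (L - 1) *
            (\<Sum>j<d. \<Sum>s<L - 1. ?D (torus_path_jump L \<eta> x y j s)))"
  proof (rule sum_mono, clarify)
    fix \<eta> x y assume "(\<eta>, x, y) \<in> ?J"
    then show "?D (\<eta>, x, y) \<le> real d * real (L - 1) *
        (\<Sum>j<d. \<Sum>s<L - 1. ?D (torus_path_jump L \<eta> x y j s))"
      using zrp_jump_diff_sq_le_torus_path[of x d L y \<eta> f] assms unfolding zrp_jumps_def by simp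
  qed
  also have "\<dots> = real d * real (L - 1) *
      (\<Sum>j<d. \<Sum>s<L - 1. \<Sum>(\<eta>, x, y)\<in>?J. ?D (torus_path_jump L \<eta> x y j s))"
    by (simp add: sum_distrib_left case_prod_unfold sum.swap[of _ ?J])
  also have "\<dots> \<le> real d * real (L - 1) * (\<Sum>j<d. \<Sum>s<L - 1. real L ^ d * ?E j)"
  proof (intro mult_left_mono sum_mono)
    fix j s assume "j \<in> {..<d}"
    then show "(\<Sum>(\<eta>, x, y)\<in>?J. ?D (torus_path_jump L \<eta> x y j s)) \<le> real L ^ d * ?E j"
      using assms by (intro sum_torus_path_jump_le) auto
  qed simp
  also have "\<dots> = real d * real (L - 1) ^ 2 * real L ^ d *
      (\<Sum>(\<eta>, x, y)\<in>?J. (\<Sum>j<d. if y = torus_step L j x then 1 else 0) * ?D (\<eta>, x, y))"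
    by (simp add: sum_distrib_left sum_distrib_right sum.swap[of _ ?J] case_prod_unfold
        power2_eq_square mult_ac if_distrib cong: if_cong)
  also have "\<dots> \<le> real d * real (L - 1) ^ 2 * real L ^ d *
      (\<Sum>(\<eta>, x, y)\<in>?J. 2 * d * torus_kernel d L x y * ?D (\<eta>, x, y))"
    using assms
    by (intro mult_left_mono sum_mono)
      (auto simp: zrp_jumps_def intro!: mult_right_mono sum_torus_step_indicator_le)
  also have "\<dots> = 2 * real d ^ 2 * real (L - 1) ^ 2 * real L ^ d *
      (\<Sum>(\<eta>, x, y)\<in>?J. torus_kernel d L x y * ?D (\<eta>, x, y))"
    by (simp add: sum_distrib_left case_prod_unfold power2_eq_square mult_ac)
  finally have "(\<Sum>(\<eta>, x, y)\<in>?J. ?D (\<eta>, x, y)) \<le> 2 * real d ^ 2 * real (L - 1) ^ 2 * real L ^ d *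
      (\<Sum>(\<eta>, x, y)\<in>?J. torus_kernel d L x y * ?D (\<eta>, x, y))" .
  moreover have "0 \<le> 2 * real (card (zrp_configs ?V r))" by simp
  ultimately show ?thesis
    unfolding zrp_dirichlet_eq_sum_jumps[OF finite_torus_vertices] mult_1 times_divide_eq_right
    by (rule divide_right_mono)
qed

lemma zrp_dirichlet_complete_le_torus:
  fixes h :: "(nat \<Rightarrow> nat) \<Rightarrow> nat"
  assumes "1 \<le> d" "3 \<le> L"
  shows "zrp_dirichlet (torus_vertices d L) (\<lambda>x y. complete_kernel (L ^ d) (h x) (h y)) r f
    \<le> 2 * real d ^ 2 * real L ^ 2 * zrp_dirichlet (torus_vertices d L) (torus_kernel d L) r f"
proof -
  let ?V = "torus_vertices d L"
  let ?n = "real L ^ d"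
  let ?E = "zrp_dirichlet ?V (torus_kernel d L) r f"
  have n: "real L \<le> ?n" using assms by (simp add: power_increasing[of 1 d "real L", simplified])
  have E: "0 \<le> ?E" by (rule zrp_dirichlet_nonneg) (simp add: torus_kernel_def)
  have "zrp_dirichlet ?V (\<lambda>x y. complete_kernel (L ^ d) (h x) (h y)) r f
      \<le> 1 / (?n - 1) * zrp_dirichlet ?V (\<lambda>_ _. 1) r f"
    using assms n
    by (intro zrp_dirichlet_mono) (simp_all add: finite_torus_vertices complete_kernel_def)
  also have "\<dots> \<le> 1 / (?n - 1) * (2 * real d ^ 2 * real (L - 1) ^ 2 * ?n * ?E)"
    using assms n by (intro mult_left_mono zrp_dirichlet_ones_le_torus) auto
  also have "\<dots> = 2 * real d ^ 2 * ?E * ((real L - 1)\<^sup>2 * ?n / (?n - 1))"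
    using assms by simp
  also have "\<dots> \<le> 2 * real d ^ 2 * ?E * real L ^ 2"
    using assms n E pred_sq_mult_le[of "real L" ?n]
    by (intro mult_left_mono) (auto simp: field_simps)
  finally show ?thesis by (simp add: mult_ac)
qed

theorem mainTheorem2:
  fixes d L r :: nat
  assumes "d \<ge> 1" and "L \<ge> 3" and "r \<ge> 1"
  shows "zrp_relax (torus_vertices d L) (torus_kernel d L) r
           \<le> 2 * real d ^ 2 * real L ^ 2 * zrp_relax {0..<L ^ d} (complete_kernel (L ^ d)) r"
proof -
  let ?V = "torus_vertices d L"
  let ?K = "complete_kernel (L ^ d)"
  have "L ^ 1 \<le> L ^ d" using assms by (intro power_increasing) auto
  then have n: "2 \<le> L ^ d" using assms by simp
  have "card ?V = card {0..<L ^ d}" by (simp add: card_torus_vertices)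
  then obtain h where h: "bij_betw h ?V {0..<L ^ d}"
    using finite_same_card_bij[OF finite_torus_vertices finite_atLeastLessThan] by blast
  have relabel: "zrp_gap {0..<L ^ d} ?K r = zrp_gap ?V (\<lambda>x y. ?K (h x) (h y)) r"
    using h by (rule zrp_gap_relabel)
  then have gap: "0 < zrp_gap ?V (\<lambda>x y. ?K (h x) (h y)) r"
    using zrp_gap_complete_pos[OF n assms(3)] by simp
  have nontrivial: "\<exists>f. zrp_var ?V r f \<noteq> 0"
    using assms by (intro zrp_var_nonzero_exists_torus) auto
  have "zrp_relax ?V (torus_kernel d L) r
      \<le> 2 * real d ^ 2 * real L ^ 2 * zrp_relax ?V (\<lambda>x y. ?K (h x) (h y)) r"
  proof (rule zrp_relax_le_of_dirichlet_le[OF _ gap _ nontrivial])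
    show "zrp_dirichlet ?V (\<lambda>x y. ?K (h x) (h y)) r f
        \<le> 2 * real d ^ 2 * real L ^ 2 * zrp_dirichlet ?V (torus_kernel d L) r f" for f
      using assms by (intro zrp_dirichlet_complete_le_torus)
  qed (use assms in \<open>auto simp: complete_kernel_def\<close>)
  then show ?thesis unfolding zrp_relax_def relabel .
qed

end
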